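(* Let $\mathcal{I}$ be an interval hypergraph on $[n]$, $A$ an acyclic orientation of $\mathcal{I}$, and $i\in[n]$ such that there is $I\in\mathcal{I}$ with $i=A(I)<\max(I)$. Then there exists $j>i$ such that the orientation $B$ obtained from $A$ by flipping $i$ to $j$ (i.e. $B(H)=j$ if $A(H)=i$ and $j\in H$, and $B(H)=A(H)$ otherwise) is acyclic. Symmetrically, if there is $I\in\mathcal{I}$ with $i=A(I)>\min(I)$, there exists $j<i$ such that the orientation obtained from $A$ by flipping $i$ to $j$ (defined by the same formula) is acyclic.
   Context: An interval hypergraph $\mathcal{I}$ on $[n]$ is a collection of intervals of $[n]$ containing all singletons. An orientation is a map $O:\mathcal{I}\to[n]$ with $O(I)\in I$; it is acyclic if there are no $H_1,\dots,H_k$, $k\ge2$, with $O(H_{i+1})\in H_i\setminus\{O(H_i)\}$ for $i\in[k-1]$ and $O(H_1)\in H_k\setminus\{O(H_k)\}$. *)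

theory Defs
  imports Main
begin

definition is_interval :: "nat \<Rightarrow> nat set \<Rightarrow> bool" where
  "is_interval n H \<longleftrightarrow> (\<exists>a b. 1 \<le> a \<and> a \<le> b \<and> b \<le> n \<and> H = {a..b})"

definition interval_hypergraph :: "nat \<Rightarrow> nat set set \<Rightarrow> bool" where
  "interval_hypergraph n \<I> \<longleftrightarrow>
     (\<forall>H\<in>\<I>. is_interval n H) \<and> (\<forall>i\<in>{1..n}. {i} \<in> \<I>)"

definition orientation :: "nat set set \<Rightarrow> (nat set \<Rightarrow> nat) \<Rightarrow> bool" where
  "orientation \<I> Or \<longleftrightarrow> (\<forall>H\<in>\<I>. Or H \<in> H)"

definition acyclic_orientation :: "nat set set \<Rightarrow> (nat set \<Rightarrow> nat) \<Rightarrow> bool" where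
  "acyclic_orientation \<I> Or \<longleftrightarrow> orientation \<I> Or \<and>
     \<not> (\<exists>k Hs. k \<ge> 2 \<and> (\<forall>t<k. Hs t \<in> \<I>) \<and>
          (\<forall>t<k - 1. Or (Hs (Suc t)) \<in> Hs t - {Or (Hs t)}) \<and>
          Or (Hs 0) \<in> Hs (k - 1) - {Or (Hs (k - 1))})"

definition flip :: "(nat set \<Rightarrow> nat) \<Rightarrow> nat \<Rightarrow> nat \<Rightarrow> nat set \<Rightarrow> nat" where
  "flip A i j = (\<lambda>H. if A H = i \<and> j \<in> H then j else A H)"

end

theory Submission
  imports Defs "HOL-Library.Product_Lexorder"
begin

text \<open>An orientation is acyclic iff its arcs, leading from the chosen vertex A H to the
  other vertices of H, admit a rank that strictly decreases along every arc. Let U be the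
  union of the hyperedges oriented to i, S the vertices on one side of i, and j the vertex
  of U \<inter> S of highest rank. Lifting j, together with the vertices of S - U ranked between
  j and i, to just above i yields a rank for the flipped orientation.\<close>

definition arcs :: "nat set set \<Rightarrow> (nat set \<Rightarrow> nat) \<Rightarrow> nat rel" where
  "arcs \<I> A = {(A H, v) | H v. H \<in> \<I> \<and> v \<in> H \<and> v \<noteq> A H}"

lemma acyclic_arcs_if_acyclic_orientation:
  assumes "acyclic_orientation \<I> A"
  shows "acyclic (arcs \<I> A)"
  unfolding acyclic_def
proof (intro allI notI)
  fix v assume "(v, v) \<in> (arcs \<I> A)\<^sup>+"
  then obtain k where k: "k > 0" "(v, v) \<in> arcs \<I> A ^^ k"
    by (auto simp: trancl_power)
  then obtain f where f: "f 0 = v" "f k = v" "\<And>l. l < k \<Longrightarrow> (f l, f (Suc l)) \<in> arcs \<I> A"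
    by (auto simp: relpow_fun_conv)
  have "\<forall>l. \<exists>H. l < k \<longrightarrow> H \<in> \<I> \<and> f l = A H \<and> f (Suc l) \<in> H - {A H}"
    using f(3) by (auto simp: arcs_def)
  then obtain Hs where Hs: "\<And>l. l < k \<Longrightarrow> Hs l \<in> \<I> \<and> f l = A (Hs l) \<and> f (Suc l) \<in> Hs l - {A (Hs l)}"
    by metis
  have "k \<noteq> 1"
    using Hs[of 0] f by auto
  with k have "k \<ge> 2" by simp
  moreover have "A (Hs (Suc t)) \<in> Hs t - {A (Hs t)}" if "t < k - 1" for t
    using Hs[of t] Hs[of "Suc t"] that by auto
  moreover have "A (Hs 0) \<in> Hs (k - 1) - {A (Hs (k - 1))}"
    using Hs[of 0] Hs[of "k - 1"] k f by simp
  ultimately show False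
    using assms Hs unfolding acyclic_orientation_def by blast
qed

lemma acyclic_orientation_if_acyclic_arcs:
  assumes orient: "orientation \<I> A" and acyclic: "acyclic (arcs \<I> A)"
  shows "acyclic_orientation \<I> A"
proof -
  have False
    if k: "k \<ge> 2" and Hs: "\<forall>t<k. Hs t \<in> \<I>"
      and step: "\<forall>t<k - 1. A (Hs (Suc t)) \<in> Hs t - {A (Hs t)}"
      and close: "A (Hs 0) \<in> Hs (k - 1) - {A (Hs (k - 1))}" for k Hs
  proof -
    have path: "(A (Hs 0), A (Hs t)) \<in> (arcs \<I> A)\<^sup>*" if "t < k" for t
      using that
    proof (induction t)
      case (Suc t)
      then have "(A (Hs t), A (Hs (Suc t))) \<in> arcs \<I> A"
        using Hs step by (auto simp: arcs_def)
      with Suc show ?case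
        by (meson Suc_lessD rtrancl.rtrancl_into_rtrancl)
    qed simp
    have "(A (Hs (k - 1)), A (Hs 0)) \<in> arcs \<I> A"
      using Hs close k by (auto simp: arcs_def)
    with path[of "k - 1"] k have "(A (Hs 0), A (Hs 0)) \<in> (arcs \<I> A)\<^sup>+"
      by simp
    with acyclic show False
      unfolding acyclic_def by blast
  qed
  with orient show ?thesis
    unfolding acyclic_orientation_def by blast
qed

lemma acyclic_orientation_iff_acyclic_arcs:
  "acyclic_orientation \<I> A \<longleftrightarrow> orientation \<I> A \<and> acyclic (arcs \<I> A)"
  using acyclic_arcs_if_acyclic_orientation acyclic_orientation_if_acyclic_arcs
    acyclic_orientation_def by blast

lemma acyclic_if_rank:
  fixes r :: "'a \<Rightarrow> 'b::order"
  assumes "\<And>u v. (u, v) \<in> R \<Longrightarrow> r v < r u"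
  shows "acyclic R"
proof (rule acyclic_subset)
  have "trans {(u, v). r v < r u}"
    by (auto intro: transI)
  then show "acyclic {(u, v). r v < r u}"
    by (simp add: acyclic_irrefl irrefl_def)
  show "R \<subseteq> {(u, v). r v < r u}"
    using assms by auto
qed

lemma finite_acyclic_rank:
  assumes "finite (Range R)" and "acyclic R"
  obtains r :: "'a \<Rightarrow> nat" where "\<And>u v. (u, v) \<in> R \<Longrightarrow> r v < r u"
proof
  fix u v assume uv: "(u, v) \<in> R"
  have "{w. (v, w) \<in> R\<^sup>+} \<subset> {w. (u, w) \<in> R\<^sup>+}"
  proof
    show "{w. (v, w) \<in> R\<^sup>+} \<subseteq> {w. (u, w) \<in> R\<^sup>+}"
      using uv by auto
    have "(v, v) \<notin> R\<^sup>+"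
      using \<open>acyclic R\<close> by (simp add: acyclic_def)
    with uv show "{w. (v, w) \<in> R\<^sup>+} \<noteq> {w. (u, w) \<in> R\<^sup>+}"
      by auto
  qed
  moreover have "finite {w. (u, w) \<in> R\<^sup>+}"
    using \<open>finite (Range R)\<close> by (rule rev_finite_subset) (auto dest: tranclD2)
  ultimately show "card {w. (v, w) \<in> R\<^sup>+} < card {w. (u, w) \<in> R\<^sup>+}"
    by (rule psubset_card_mono[rotated])
qed

lemma acyclic_flip_to_highest_ranked:
  fixes \<I> :: "nat set set" and A :: "nat set \<Rightarrow> nat" and i :: nat and r :: "nat \<Rightarrow> nat"
  defines "U \<equiv> \<Union>{H\<in>\<I>. A H = i}"
  assumes orient: "orientation \<I> A"
    and rank: "\<And>H v. H \<in> \<I> \<Longrightarrow> v \<in> H \<Longrightarrow> v \<noteq> A H \<Longrightarrow> r v < r (A H)"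
    and i_notin: "i \<notin> S"
    and separates: "\<And>H v h. H \<in> \<I> \<Longrightarrow> v \<in> H \<inter> S \<Longrightarrow> h \<in> H - S \<Longrightarrow> i \<in> H"
    and j: "j \<in> S \<inter> U" and j_max: "\<And>x. x \<in> S \<inter> U \<Longrightarrow> r x \<le> r j"
  shows "acyclic (arcs \<I> (flip A i j))"
proof -
  have r_U: "r x \<le> r i" if "x \<in> U" for x
    using that rank by (fastforce simp: U_def)
  obtain H0 where H0: "H0 \<in> \<I>" "A H0 = i" "j \<in> H0"
    using j by (auto simp: U_def)
  have "j \<noteq> i"
    using j i_notin by blast
  with H0 rank have rji: "r j < r i"
    by fastforce
  define X where "X = insert j {x \<in> S - U. r j \<le> r x \<and> r x \<le> r i}"
  have X: "x \<in> S \<and> r j \<le> r x \<and> r x \<le> r i" if "x \<in> X" for x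
    using that j rji by (auto simp: X_def)
  have X_U: "x = j" if "x \<in> X" "x \<in> U" for x
    using that by (auto simp: X_def)
  have i_X: "i \<notin> X"
    using X i_notin by blast
  have target_above_i: "r i < r h"
    if H: "H \<in> \<I>" "v \<in> H" "v \<noteq> h" and h: "A H = h" "h \<noteq> i" "h \<notin> X" and v: "v \<in> X" for H v h
  proof (rule ccontr)
    assume not_above: "\<not> r i < r h"
    have v_below: "r j \<le> r v" "r v < r h" "v \<in> S"
      using X[OF v] rank H h by auto
    have "h \<in> H"
      using orient H h by (auto simp: orientation_def)
    show False
    proof (cases "h \<in> S")
      case False
      then have "i \<in> H"
        using separates H(1,2) v_below(3) \<open>h \<in> H\<close> by blast
      then show False
        using rank[OF H(1)] h not_above by fastforce
    next
      case True
      have "h \<notin> U"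
        using j_max[of h] True v_below by fastforce
      with True v_below not_above have "h \<in> X"
        by (auto simp: X_def)
      with h show False
        by blast
    qed
  qed
  define r' :: "nat \<Rightarrow> nat \<times> nat" where
    "r' x = (if x \<in> X then (r i, Suc (r x)) else (r x, 0))" for x
  show ?thesis
  proof (rule acyclic_if_rank[of _ r'])
    fix u v assume "(u, v) \<in> arcs \<I> (flip A i j)"
    then obtain H where H: "H \<in> \<I>" "v \<in> H" "v \<noteq> flip A i j H" and u: "u = flip A i j H"
      by (auto simp: arcs_def)
    consider "A H = i" "j \<in> H" | "A H = i" "j \<notin> H" | "A H \<noteq> i"
      by blast
    then show "r' v < r' u"
    proof cases
      case 1
      then have "u = j" "v \<notin> X" "r v \<le> r i"
        using H u X_U r_U by (auto simp: U_def flip_def)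
      moreover have "j \<in> X"
        by (simp add: X_def)
      ultimately show ?thesis
        by (simp add: r'_def)
    next
      case 2
      then have "u = i" "v \<notin> X" "r v < r i"
        using H u X_U rank by (auto simp: U_def flip_def)
      with i_X show ?thesis
        by (simp add: r'_def)
    next
      case 3
      then have "u = A H" "r v < r u"
        using H rank u by (auto simp: flip_def)
      moreover have "r i < r u" if "u \<notin> X" "v \<in> X"
        using target_above_i[OF H(1,2)] H(3) u 3 that \<open>u = A H\<close> by auto
      moreover have "r u \<le> r i" if "u \<in> X"
        using X that by blast
      ultimately show ?thesis
        by (auto simp: r'_def)
    qed
  qed
qed

lemma orientation_flip:
  "orientation \<I> A \<Longrightarrow> orientation \<I> (flip A i j)"
  by (simp add: orientation_def flip_def)

lemma acyclic_flip_into_side: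
  assumes fin: "finite (\<Union>\<I>)" and A: "acyclic_orientation \<I> A"
    and i_notin: "i \<notin> S"
    and separates: "\<And>H v h. H \<in> \<I> \<Longrightarrow> v \<in> H \<inter> S \<Longrightarrow> h \<in> H - S \<Longrightarrow> i \<in> H"
    and I: "I \<in> \<I>" "A I = i" "I \<inter> S \<noteq> {}"
  shows "\<exists>j\<in>S. (\<exists>H\<in>\<I>. A H = i \<and> j \<in> H) \<and> acyclic_orientation \<I> (flip A i j)"
proof -
  have orient: "orientation \<I> A" and "acyclic (arcs \<I> A)"
    using A by (simp_all add: acyclic_orientation_iff_acyclic_arcs)
  moreover have "finite (Range (arcs \<I> A))"
    using fin by (rule rev_finite_subset) (auto simp: arcs_def)
  ultimately obtain r :: "nat \<Rightarrow> nat" where r: "\<And>u v. (u, v) \<in> arcs \<I> A \<Longrightarrow> r v < r u"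
    using finite_acyclic_rank by blast
  have rank: "r v < r (A H)" if "H \<in> \<I>" "v \<in> H" "v \<noteq> A H" for H v
    using r that by (auto simp: arcs_def)
  define U where "U = \<Union>{H\<in>\<I>. A H = i}"
  obtain k where "k \<in> S \<inter> U"
    using I by (auto simp: U_def)
  moreover have "\<forall>x. x \<in> S \<inter> U \<longrightarrow> r x < Suc (r i)"
    using rank by (fastforce simp: U_def less_Suc_eq_le)
  ultimately obtain j where j: "j \<in> S \<inter> U" and j_max: "\<And>x. x \<in> S \<inter> U \<Longrightarrow> r x \<le> r j"
    using Lattices_Big.ex_has_greatest_nat[of "\<lambda>x. x \<in> S \<inter> U"] by blast
  have "acyclic (arcs \<I> (flip A i j))"
    using orient rank i_notin separates j j_max unfolding U_def
    by (rule acyclic_flip_to_highest_ranked[where r = r and S = S])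
  with orient j show ?thesis
    by (auto simp: acyclic_orientation_iff_acyclic_arcs orientation_flip U_def)
qed

lemma interval_hypergraph_edgeE:
  assumes "interval_hypergraph n \<I>" and "H \<in> \<I>"
  obtains a b where "1 \<le> a" "a \<le> b" "b \<le> n" "H = {a..b}"
  using assms unfolding interval_hypergraph_def is_interval_def by blast

lemma interval_hypergraph_edge_convex:
  assumes "interval_hypergraph n \<I>" and "H \<in> \<I>" and "a \<in> H" "b \<in> H" "a \<le> c" "c \<le> b"
  shows "c \<in> H"
proof -
  obtain a' b' where "H = {a'..b'}"
    by (rule interval_hypergraph_edgeE[OF assms(1,2)])
  with assms(3-) show ?thesis
    by auto
qed

lemma interval_hypergraph_Min_Max_in:
  assumes "interval_hypergraph n \<I>" and "H \<in> \<I>"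
  shows "Min H \<in> H" "Max H \<in> H"
proof -
  obtain a b where "a \<le> b" "H = {a..b}"
    by (rule interval_hypergraph_edgeE[OF assms])
  then show "Min H \<in> H" "Max H \<in> H"
    by auto
qed

lemma interval_hypergraph_acyclic_flip_into_side:
  assumes \<I>: "interval_hypergraph n \<I>" and A: "acyclic_orientation \<I> A"
    and i_notin: "i \<notin> S"
    and separates: "\<And>H v h. H \<in> \<I> \<Longrightarrow> v \<in> H \<inter> S \<Longrightarrow> h \<in> H - S \<Longrightarrow> i \<in> H"
    and I: "I \<in> \<I>" "A I = i" "I \<inter> S \<noteq> {}"
  shows "\<exists>j\<in>{1..n} \<inter> S. acyclic_orientation \<I> (flip A i j)"
proof -
  have edges_in: "H \<subseteq> {1..n}" if "H \<in> \<I>" for H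
    by (rule interval_hypergraph_edgeE[OF \<I> that]) auto
  then have "\<Union>\<I> \<subseteq> {1..n}"
    by blast
  then have fin: "finite (\<Union>\<I>)"
    by (rule finite_subset) simp
  from fin A i_notin separates I
  have "\<exists>j\<in>S. (\<exists>H\<in>\<I>. A H = i \<and> j \<in> H) \<and> acyclic_orientation \<I> (flip A i j)"
    by (rule acyclic_flip_into_side)
  then obtain j H where "j \<in> S" "H \<in> \<I>" "j \<in> H" "acyclic_orientation \<I> (flip A i j)"
    by blast
  with edges_in show ?thesis
    by blast
qed

theorem proposition3p16:
  fixes n :: nat and \<I> :: "nat set set" and A :: "nat set \<Rightarrow> nat" and i :: nat
  assumes "interval_hypergraph n \<I>"
    and "acyclic_orientation \<I> A"
  shows "((\<exists>I\<in>\<I>. i = A I \<and> A I < Max I) \<longrightarrow>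
            (\<exists>j\<in>{1..n}. j > i \<and> acyclic_orientation \<I> (flip A i j)))
       \<and> ((\<exists>I\<in>\<I>. i = A I \<and> A I > Min I) \<longrightarrow>
            (\<exists>j\<in>{1..n}. j < i \<and> acyclic_orientation \<I> (flip A i j)))"
proof -
  have separates: "i \<in> H"
    if "S = {i<..} \<or> S = {..<i}" "H \<in> \<I>" "v \<in> H \<inter> S" "h \<in> H - S" for S H v h
    using that interval_hypergraph_edge_convex[OF assms(1), of H h v i]
      interval_hypergraph_edge_convex[OF assms(1), of H v h i] by auto
  note extremes = interval_hypergraph_Min_Max_in[OF assms(1)]
  have "\<exists>j\<in>{1..n} \<inter> {i<..}. acyclic_orientation \<I> (flip A i j)"
    if "I \<in> \<I>" "A I = i" "i < Max I" for I
    by (rule interval_hypergraph_acyclic_flip_into_side[OF assms, of i "{i<..}" I])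
      (use that separates extremes[OF that(1)] in auto)
  moreover have "\<exists>j\<in>{1..n} \<inter> {..<i}. acyclic_orientation \<I> (flip A i j)"
    if "I \<in> \<I>" "A I = i" "Min I < i" for I
    by (rule interval_hypergraph_acyclic_flip_into_side[OF assms, of i "{..<i}" I])
      (use that separates extremes[OF that(1)] in auto)
  ultimately show ?thesis
    by fastforce
qed

end
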